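(* Let $a, d, \varepsilon \in \mathbb{R}$ and $k \in \mathbb{N}$, $k \geq 1$, with $0 < \varepsilon \leq d/2$, $a - \varepsilon > 0$ and $a + kd + \varepsilon < 1$. Let $p : \mathbb{R} \to \{0,1\}$ be the pulse function of the arithmetic progression $A = \{a, a+d, \dots, a+kd\}$ with parameter $\varepsilon$. Let $y_1, y_2 \in \mathbb{Z}$ with $y_2 - y_1 = k$, and let $P$ be a convex quadrilateral with vertices $(\ell_1, y_1)$, $(r_1, y_1)$, $(\ell_2, y_2)$, $(r_2, y_2)$. Suppose that (1) $\ell_1 < r_1$ and $\ell_2 < r_2$; (2) $\{\ell_1\} = a + \varepsilon$ and $\{\ell_2\} = a + kd + \varepsilon$; (3) $\{r_1\} = a - \varepsilon$ and $\{r_2\} = a + kd - \varepsilon$; (4) $k$ divides $\lfloor \ell_2 \rfloor - \lfloor \ell_1 \rfloor$ and $k$ divides $\lfloor r_2 \rfloor - \lfloor r_1 \rfloor$. Then there exists $M \in \mathbb{N}$ such that $$\Big| \big( t\,(-1,0)^T + P \big) \cap \mathbb{Z}^2 \Big| = M + p(\{t\}) \quad \text{for all } t \in [0,1].$$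
   Context: $\{x\} = x - \lfloor x \rfloor$ denotes the fractional part of $x \in \mathbb{R}$. For a finite set $A \subset \mathbb{R}$ and $\varepsilon > 0$, the pulse function of $A$ with parameter $\varepsilon$ is $p(x) = 0$ if $|x - y| < \varepsilon$ for some $y \in A$, and $p(x) = 1$ otherwise. The arithmetic progression defined by $(a,k,d)$ is $\{a, a+d, a+2d, \dots, a+kd\}$. $t\,(-1,0)^T + P = \{x + t(-1,0)^T : x \in P\}$. *)

theory Defs
  imports "HOL-Analysis.Analysis"
begin

definition pulse :: "real set \<Rightarrow> real \<Rightarrow> real \<Rightarrow> nat" where
  "pulse A eps x = (if \<exists>y\<in>A. \<bar>x - y\<bar> < eps then 0 else 1)"

definition arith_prog :: "real \<Rightarrow> nat \<Rightarrow> real \<Rightarrow> real set" where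
  "arith_prog a k d = {a + real i * d | i. i \<le> k}"

end

theory Submission
  imports Defs
begin

(*
  The quadrilateral P has horizontal bases at the integer heights y1 and
  y2 = y1 + k, so it is the trapezoid whose horizontal section at height y1 + i
  (0 <= i <= k) is the interval [L i, R i], with L and R interpolating linearly between
  l1, l2 and r1, r2 (edge_x).  Shifting P by t to the left, the lattice points on row i are
  the integers of [L i - t, R i - t].  The divisibility hypotheses make the fractional parts
  of L i and R i equal to a + i d + eps and a + i d - eps; hence, for t in [0,1], row i
  loses exactly one lattice point when t lies within eps of a + i d, and otherwise has a
  count independent of t.  Because 2 eps <= d, at most one row loses a point, and a point
  is lost exactly when the pulse of the progression vanishes at {t}.
*)

lemma convex_hull_trapezoid:
  fixes l1 r1 l2 r2 y1 y2 :: real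
  assumes h: "y1 < y2" and lr: "l1 \<le> r1" "l2 \<le> r2"
  shows "convex hull {(l1,y1),(r1,y1),(l2,y2),(r2,y2)} =
    {p. y1 \<le> snd p \<and> snd p \<le> y2 \<and>
        l1 + (snd p - y1)/(y2-y1)*(l2-l1) \<le> fst p \<and> fst p \<le> r1 + (snd p - y1)/(y2-y1)*(r2-r1)}"
    (is "?H = ?S")
proof
  have halfspaces: "?S = {p. inner (0,-1) p \<le> -y1} \<inter> {p. inner (0,1) p \<le> y2} \<inter>
     {p. inner (-1, (l2-l1)/(y2-y1)) p \<le> -l1 + y1*(l2-l1)/(y2-y1)} \<inter>
     {p. inner (1, -(r2-r1)/(y2-y1)) p \<le> r1 - y1*(r2-r1)/(y2-y1)}"
    by (auto simp: inner_prod_def algebra_simps diff_divide_distrib add_divide_distrib)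
  have "convex ?S" unfolding halfspaces by (intro convex_Int convex_halfspace_le)
  moreover have "{(l1,y1),(r1,y1),(l2,y2),(r2,y2)} \<subseteq> ?S" using h lr by auto
  ultimately show "?H \<subseteq> ?S" by (simp add: hull_minimal)
next
  show "?S \<subseteq> ?H"
  proof
    fix p assume p: "p \<in> ?S"
    obtain x y where pxy: "p = (x,y)" by (cases p)
    define s where "s = (y - y1)/(y2-y1)"
    have s01: "0 \<le> s" "s \<le> 1" using p h by (auto simp: s_def pxy)
    have cH: "convex ?H" by simp
    have inc: "\<And>q. q \<in> {(l1,y1),(r1,y1),(l2,y2),(r2,y2)} \<Longrightarrow> q \<in> ?H" by (rule hull_inc)
    have "s*(y2-y1) = y - y1" using h unfolding s_def by simp
    then have ysy: "(1-s)*y1 + s*y2 = y" by (simp add: algebra_simps)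
    define Lx where "Lx = l1 + s*(l2-l1)"
    define Rx where "Rx = r1 + s*(r2-r1)"
    have "(1-s) *\<^sub>R (l1,y1) + s *\<^sub>R (l2,y2) \<in> ?H"
      by (rule convexD[OF cH inc inc]) (use s01 in auto)
    then have L: "(Lx, y) \<in> ?H" using ysy by (simp add: Lx_def algebra_simps)
    have "(1-s) *\<^sub>R (r1,y1) + s *\<^sub>R (r2,y2) \<in> ?H"
      by (rule convexD[OF cH inc inc]) (use s01 in auto)
    then have R: "(Rx, y) \<in> ?H" using ysy by (simp add: Rx_def algebra_simps)
    have x: "Lx \<le> x" "x \<le> Rx" using p by (auto simp: pxy Lx_def Rx_def s_def)
    show "p \<in> ?H"
    proof (cases "Lx = Rx")
      case True then show ?thesis using x L pxy by auto
    next
      case False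
      then have lt: "Lx < Rx" using x by auto
      define w where "w = (x - Lx)/(Rx - Lx)"
      have w01: "0 \<le> w" "w \<le> 1" using x lt by (auto simp: w_def)
      have mem: "(1-w) *\<^sub>R (Lx,y) + w *\<^sub>R (Rx,y) \<in> ?H"
        by (rule convexD[OF cH L R]) (use w01 in auto)
      have "w*(Rx-Lx) = x - Lx" using lt unfolding w_def by simp
      then have "(1-w) *\<^sub>R (Lx,y) + w *\<^sub>R (Rx,y) = p"
        by (simp add: pxy algebra_simps)
      with mem show ?thesis by simp
    qed
  qed
qed

definition edge_x :: "real \<Rightarrow> real \<Rightarrow> nat \<Rightarrow> nat \<Rightarrow> real" where
  "edge_x u v k i = u + real i / real k * (v - u)"

text \<open>At every intermediate height, an edge whose endpoints lie to the right of those of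
  another edge stays to its right; this keeps every row of the trapezoid well formed.\<close>

lemma edge_x_mono:
  assumes "u \<le> u'" "v \<le> v'" "i \<le> k"
  shows "edge_x u v k i \<le> edge_x u' v' k i"
proof -
  define s where "s = real i / real k"
  have s01: "0 \<le> s" "s \<le> 1" using assms(3) by (auto simp: s_def divide_le_eq_1)
  have "edge_x u' v' k i - edge_x u v k i = (1 - s) * (u' - u) + s * (v' - v)"
    unfolding edge_x_def s_def[symmetric] by (simp add: algebra_simps)
  also have "\<dots> \<ge> 0" using s01 assms(1,2) by (intro add_nonneg_nonneg mult_nonneg_nonneg) auto
  finally show ?thesis by simp
qed

lemma mem_translate_left:
  fixes H :: "(real \<times> real) set"
  shows "p \<in> (\<lambda>x. t *\<^sub>R (-1, 0) + x) ` H \<longleftrightarrow> (fst p + t, snd p) \<in> H"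
proof
  assume "p \<in> (\<lambda>x. t *\<^sub>R (-1, 0) + x) ` H"
  then obtain x where "x \<in> H" "p = t *\<^sub>R (-1, 0) + x" by auto
  then show "(fst p + t, snd p) \<in> H" by simp
next
  assume "(fst p + t, snd p) \<in> H"
  moreover have "p = t *\<^sub>R (-1, 0) + (fst p + t, snd p)" by (simp add: prod_eq_iff)
  ultimately show "p \<in> (\<lambda>x. t *\<^sub>R (-1, 0) + x) ` H" by blast
qed

lemma trapezoid_lattice_points:
  fixes l1 r1 l2 r2 t :: real and y1 y2 :: int and k :: nat
  assumes "k > 0" "y2 - y1 = int k" "l1 \<le> r1" "l2 \<le> r2"
  shows "{z :: int \<times> int. (real_of_int (fst z), real_of_int (snd z)) \<in>
      (\<lambda>x. t *\<^sub>R (-1, 0) + x) ` (convex hull {(l1, real_of_int y1), (r1, real_of_int y1),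
                                             (l2, real_of_int y2), (r2, real_of_int y2)})}
    = (\<lambda>(i, x). (x, y1 + int i)) `
        (SIGMA i:{0..k}. {\<lceil>edge_x l1 l2 k i - t\<rceil>..\<lfloor>edge_x r1 r2 k i - t\<rfloor>})"
    (is "?Z = ?rows")
proof -
  have height: "real_of_int y2 - real_of_int y1 = real k"
    using assms(2) by (metis of_int_diff of_int_of_nat_eq)
  have mem: "(real_of_int x + t, real_of_int y) \<in> convex hull {(l1, real_of_int y1),
        (r1, real_of_int y1), (l2, real_of_int y2), (r2, real_of_int y2)}
      \<longleftrightarrow> (\<exists>i\<le>k. y = y1 + int i \<and> edge_x l1 l2 k i \<le> real_of_int x + t \<and>
                   real_of_int x + t \<le> edge_x r1 r2 k i)" for x y :: int
  proof -
    have rows: "(y1 \<le> y \<and> y \<le> y2) \<longleftrightarrow> (\<exists>i\<le>k. y = y1 + int i)"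
    proof
      assume "y1 \<le> y \<and> y \<le> y2"
      then show "\<exists>i\<le>k. y = y1 + int i"
        using assms(2) by (intro exI[of _ "nat (y - y1)"]) auto
    qed (use assms(2) in auto)
    have sect: "(real_of_int x + t, real_of_int y) \<in> convex hull {(l1, real_of_int y1),
        (r1, real_of_int y1), (l2, real_of_int y2), (r2, real_of_int y2)} \<longleftrightarrow>
        y1 \<le> y \<and> y \<le> y2 \<and>
        l1 + (real_of_int y - real_of_int y1) / real k * (l2 - l1) \<le> real_of_int x + t \<and>
        real_of_int x + t \<le> r1 + (real_of_int y - real_of_int y1) / real k * (r2 - r1)"
      using convex_hull_trapezoid[of "real_of_int y1" "real_of_int y2" l1 r1 l2 r2] height assms
      by simp
    show ?thesis unfolding sect edge_x_def
    proof
      assume in_section: "y1 \<le> y \<and> y \<le> y2 \<and>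
        l1 + (real_of_int y - real_of_int y1) / real k * (l2 - l1) \<le> real_of_int x + t \<and>
        real_of_int x + t \<le> r1 + (real_of_int y - real_of_int y1) / real k * (r2 - r1)"
      then obtain i where "i \<le> k" "y = y1 + int i" using rows by blast
      with in_section show "\<exists>i\<le>k. y = y1 + int i \<and>
        l1 + real i / real k * (l2 - l1) \<le> real_of_int x + t \<and>
        real_of_int x + t \<le> r1 + real i / real k * (r2 - r1)" by auto
    qed (use rows in auto)
  qed
  show ?thesis
  proof (intro set_eqI iffI)
    fix z assume "z \<in> ?Z"
    then obtain i where "i \<le> k" "snd z = y1 + int i"
      "edge_x l1 l2 k i \<le> real_of_int (fst z) + t" "real_of_int (fst z) + t \<le> edge_x r1 r2 k i"
      using mem[of "fst z" "snd z"] by (auto simp: mem_translate_left)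
    then show "z \<in> ?rows"
      by (intro image_eqI[where x="(i, fst z)"]) (auto simp: ceiling_le_iff le_floor_iff prod_eq_iff)
  next
    fix z assume "z \<in> ?rows"
    then obtain i x where z: "z = (x, y1 + int i)" and "i \<le> k"
      "\<lceil>edge_x l1 l2 k i - t\<rceil> \<le> x" "x \<le> \<lfloor>edge_x r1 r2 k i - t\<rfloor>" by auto
    then have "(real_of_int x + t, real_of_int (y1 + int i)) \<in> convex hull {(l1, real_of_int y1),
        (r1, real_of_int y1), (l2, real_of_int y2), (r2, real_of_int y2)}"
      using mem[of x "y1 + int i"] by (auto simp: ceiling_le_iff le_floor_iff)
    then show "z \<in> ?Z"
      unfolding z mem_Collect_eq fst_conv snd_conv mem_translate_left by simp
  qed
qed

text \<open>Hence the number of lattice points in the shifted trapezoid is the sum of the numbers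
  of integers in its rows; every row contributes a nonnegative amount because its left end
  does not exceed its right end.\<close>

lemma trapezoid_lattice_count:
  fixes l1 r1 l2 r2 t :: real and y1 y2 :: int and k :: nat
  assumes "k > 0" "y2 - y1 = int k" "l1 \<le> r1" "l2 \<le> r2"
  shows "int (card {z :: int \<times> int. (real_of_int (fst z), real_of_int (snd z)) \<in>
      (\<lambda>x. t *\<^sub>R (-1, 0) + x) ` (convex hull {(l1, real_of_int y1), (r1, real_of_int y1),
                                             (l2, real_of_int y2), (r2, real_of_int y2)})})
    = (\<Sum>i\<in>{0..k}. \<lfloor>edge_x r1 r2 k i - t\<rfloor> - \<lceil>edge_x l1 l2 k i - t\<rceil> + 1)"
proof -
  let ?row = "\<lambda>i. {\<lceil>edge_x l1 l2 k i - t\<rceil>..\<lfloor>edge_x r1 r2 k i - t\<rfloor>}"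
  have row_size: "int (card (?row i)) = \<lfloor>edge_x r1 r2 k i - t\<rfloor> - \<lceil>edge_x l1 l2 k i - t\<rceil> + 1"
    if "i \<in> {0..k}" for i
  proof -
    have "edge_x l1 l2 k i - t \<le> edge_x r1 r2 k i - t"
      using edge_x_mono[of l1 r1 l2 r2 i k] assms(3,4) that by simp
    then have "\<lfloor>edge_x l1 l2 k i - t\<rfloor> \<le> \<lfloor>edge_x r1 r2 k i - t\<rfloor>"
      by (rule floor_mono)
    then have "\<lceil>edge_x l1 l2 k i - t\<rceil> \<le> \<lfloor>edge_x r1 r2 k i - t\<rfloor> + 1"
      using ceiling_diff_floor_le_1[of "edge_x l1 l2 k i - t"] by linarith
    then show ?thesis by simp
  qed
  have "inj_on (\<lambda>(i, x). (x, y1 + int i)) (SIGMA i:{0..k}. ?row i)"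
    by (auto simp: inj_on_def)
  then have "card ((\<lambda>(i, x). (x, y1 + int i)) ` (SIGMA i:{0..k}. ?row i))
           = card (SIGMA i:{0..k}. ?row i)"
    by (rule card_image)
  also have "\<dots> = (\<Sum>i\<in>{0..k}. card (?row i))"
    by (rule card_SigmaI) auto
  finally have "int (card ((\<lambda>(i, x). (x, y1 + int i)) ` (SIGMA i:{0..k}. ?row i)))
              = (\<Sum>i\<in>{0..k}. int (card (?row i)))"
    by simp
  also have "\<dots> = (\<Sum>i\<in>{0..k}. \<lfloor>edge_x r1 r2 k i - t\<rfloor> - \<lceil>edge_x l1 l2 k i - t\<rceil> + 1)"
    by (rule sum.cong[OF refl]) (rule row_size)
  finally show ?thesis
    unfolding trapezoid_lattice_points[OF assms] .
qed

lemma edge_x_split: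
  fixes u v d :: real and k :: nat
  assumes "k > 0" "int k dvd \<lfloor>v\<rfloor> - \<lfloor>u\<rfloor>" "frac v - frac u = real k * d"
  obtains m :: int where "\<And>i. edge_x u v k i = of_int (\<lfloor>u\<rfloor> + int i * m) + (frac u + real i * d)"
proof -
  obtain m where m: "\<lfloor>v\<rfloor> - \<lfloor>u\<rfloor> = int k * m" using assms(2) by (auto elim: dvdE)
  have "real_of_int (\<lfloor>v\<rfloor> - \<lfloor>u\<rfloor>) = real k * of_int m" unfolding m by simp
  then have "v - u = real k * (of_int m + d)"
    using assms(3) by (simp add: frac_def algebra_simps)
  then have "edge_x u v k i = of_int (\<lfloor>u\<rfloor> + int i * m) + (frac u + real i * d)" for i
    using assms(1) by (simp add: edge_x_def frac_def algebra_simps)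
  then show thesis by (rule that)
qed

lemma shifted_row_count:
  fixes c eps t :: real and zl zr :: int
  assumes "0 < eps" "0 < c - eps" "c + eps < 1" "0 \<le> t" "t \<le> 1"
  shows "\<lfloor>of_int zr + (c - eps) - t\<rfloor> - \<lceil>of_int zl + (c + eps) - t\<rceil> + 1
       = zr - zl - of_bool (\<bar>t - c\<bar> < eps)"
proof -
  have "\<lfloor>of_int zr + (c - eps) - t\<rfloor> = zr + \<lfloor>c - eps - t\<rfloor>"
    using floor_add_int[of "c - eps - t" zr] by (simp add: algebra_simps)
  moreover have "\<lceil>of_int zl + (c + eps) - t\<rceil> = zl + \<lceil>c + eps - t\<rceil>"
    using ceiling_add_of_int[of "c + eps - t" zl] by (simp add: algebra_simps)
  moreover have "\<lfloor>c - eps - t\<rfloor> = (if t \<le> c - eps then 0 else -1)"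
    using assms by (intro floor_unique) auto
  moreover have "\<lceil>c + eps - t\<rceil> = (if t < c + eps then 1 else 0)"
    using assms by (intro ceiling_unique) auto
  ultimately show ?thesis using assms by (auto simp: abs_less_iff)
qed

lemma progression_inside_unit_interval:
  fixes a d eps :: real and i k :: nat
  assumes "0 \<le> d" "a - eps > 0" "a + real k * d + eps < 1" "i \<le> k"
  shows "0 < a + real i * d - eps" "a + real i * d + eps < 1"
proof -
  have "0 \<le> real i * d" "real i * d \<le> real k * d"
    using assms(1,4) by (auto intro: mult_right_mono)
  then show "0 < a + real i * d - eps" "a + real i * d + eps < 1"
    using assms(2,3) by linarith+
qed

lemma trapezoid_row_counts:
  fixes a d eps l1 r1 l2 r2 :: real and k :: nat
  assumes "k > 0" "0 < eps" "0 \<le> d" "a - eps > 0" "a + real k * d + eps < 1"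
    and "frac l1 = a + eps" "frac l2 = a + real k * d + eps"
    and "frac r1 = a - eps" "frac r2 = a + real k * d - eps"
    and "int k dvd \<lfloor>l2\<rfloor> - \<lfloor>l1\<rfloor>" "int k dvd \<lfloor>r2\<rfloor> - \<lfloor>r1\<rfloor>"
  obtains c :: "nat \<Rightarrow> int" where
    "\<And>i t. i \<le> k \<Longrightarrow> 0 \<le> t \<Longrightarrow> t \<le> 1 \<Longrightarrow>
      \<lfloor>edge_x r1 r2 k i - t\<rfloor> - \<lceil>edge_x l1 l2 k i - t\<rceil> + 1
      = c i - of_bool (\<bar>t - (a + real i * d)\<bar> < eps)"
proof -
  have "frac l2 - frac l1 = real k * d" "frac r2 - frac r1 = real k * d"
    using assms(6-9) by simp_all
  then obtain m m' where
    m: "\<And>i. edge_x l1 l2 k i = of_int (\<lfloor>l1\<rfloor> + int i * m) + (frac l1 + real i * d)" and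
    m': "\<And>i. edge_x r1 r2 k i = of_int (\<lfloor>r1\<rfloor> + int i * m') + (frac r1 + real i * d)"
    using edge_x_split[OF assms(1,10)] edge_x_split[OF assms(1,11)] by metis
  have "\<lfloor>edge_x r1 r2 k i - t\<rfloor> - \<lceil>edge_x l1 l2 k i - t\<rceil> + 1
      = (\<lfloor>r1\<rfloor> + int i * m') - (\<lfloor>l1\<rfloor> + int i * m) - of_bool (\<bar>t - (a + real i * d)\<bar> < eps)"
    if "i \<le> k" "0 \<le> t" "t \<le> 1" for i t
  proof -
    have "0 < (a + real i * d) - eps" "(a + real i * d) + eps < 1"
      using progression_inside_unit_interval[OF assms(3-5) that(1)] by simp_all
    moreover have fracs: "frac r1 + real i * d = (a + real i * d) - eps"
      "frac l1 + real i * d = (a + real i * d) + eps" using assms(6,8) by simp_all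
    ultimately show ?thesis
      unfolding m m' fracs using assms(2) that(2,3) by (intro shifted_row_count) auto
  qed
  then show thesis by (rule that)
qed

text \<open>Since 2 eps \<le> d, the eps-neighbourhoods of the progression points are disjoint, so at
  most one of them contains t.\<close>

lemma progression_near_count:
  fixes a d eps t :: real and k :: nat
  assumes "0 < eps" "2 * eps \<le> d"
  shows "(\<Sum>i\<in>{0..k}. of_bool (\<bar>t - (a + real i * d)\<bar> < eps) :: int)
       = of_bool (\<exists>i\<le>k. \<bar>t - (a + real i * d)\<bar> < eps)"
proof (cases "\<exists>i\<le>k. \<bar>t - (a + real i * d)\<bar> < eps")
  case True
  then obtain j where j: "j \<le> k" "\<bar>t - (a + real j * d)\<bar> < eps" by auto
  have unique: "i = j" if "\<bar>t - (a + real i * d)\<bar> < eps" for i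
  proof -
    have "\<bar>real i - real j\<bar> * d = \<bar>(real i - real j) * d\<bar>"
      using assms by (simp add: abs_mult)
    also have "\<dots> = \<bar>(a + real i * d) - (a + real j * d)\<bar>"
      by (simp add: left_diff_distrib)
    also have "\<dots> < d" using that j(2) assms by linarith
    finally have "\<bar>real i - real j\<bar> < 1" using assms by simp
    then show ?thesis by linarith
  qed
  have "(\<Sum>i\<in>{0..k}. of_bool (\<bar>t - (a + real i * d)\<bar> < eps) :: int)
      = (\<Sum>i\<in>{j}. of_bool (\<bar>t - (a + real i * d)\<bar> < eps))"
    using j(1) unique by (intro sum.mono_neutral_right) auto
  then show ?thesis using j True by simp
qed simp

text \<open>For t in [0,1] the pulse of the progression at frac t is one minus the number of
  progression points within eps of t; the endpoint t = 1 is harmless because the whole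
  progression stays eps away from 0 and 1.\<close>

lemma pulse_progression_frac:
  fixes a d eps t :: real and k :: nat
  assumes "0 < eps" "2 * eps \<le> d" "a - eps > 0" "a + real k * d + eps < 1" "0 \<le> t" "t \<le> 1"
  shows "int (pulse (arith_prog a k d) eps (frac t))
       = 1 - (\<Sum>i\<in>{0..k}. of_bool (\<bar>t - (a + real i * d)\<bar> < eps))"
proof -
  let ?near = "\<lambda>x. \<exists>i\<le>k. \<bar>x - (a + real i * d)\<bar> < eps"
  have "?near (frac t) = ?near t"
  proof (cases "t = 1")
    case True
    have "0 < a + real i * d - eps \<and> a + real i * d + eps < 1" if "i \<le> k" for i
      using progression_inside_unit_interval[of d a eps k i] assms(1-4) that by simp
    then show ?thesis using True by (force simp: abs_less_iff)
  qed (use assms(5,6) in \<open>simp add: frac_eq\<close>)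
  moreover have "pulse (arith_prog a k d) eps (frac t) = of_bool (\<not> ?near (frac t))"
    unfolding pulse_def arith_prog_def by auto
  ultimately show ?thesis using progression_near_count[OF assms(1,2), of t a k] by simp
qed

lemma pulse_progression_start:
  fixes a d eps :: real and k :: nat
  assumes "0 < eps" "0 \<le> a" "a < 1"
  shows "pulse (arith_prog a k d) eps (frac a) = 0"
proof -
  have "a \<in> arith_prog a k d"
    unfolding arith_prog_def by (rule CollectI, rule exI[of _ 0]) simp
  then show ?thesis
    using assms by (auto simp: frac_eq pulse_def intro!: bexI[of _ a])
qed

lemma nat_offset_exists:
  fixes f g :: "'a \<Rightarrow> nat" and c :: int
  assumes "\<And>t. t \<in> S \<Longrightarrow> int (f t) = c + int (g t)" "x \<in> S" "g x = 0"
  shows "\<exists>M::nat. \<forall>t\<in>S. f t = M + g t"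
proof -
  have "0 \<le> c" using assms(1)[OF assms(2)] assms(3) by simp
  then have "f t = nat c + g t" if "t \<in> S" for t
    using assms(1)[OF that] by linarith
  then show ?thesis by blast
qed

theorem lemma1:
  fixes a d eps l1 r1 l2 r2 :: real and k :: nat and y1 y2 :: int
  assumes "k \<ge> 1"
    and "0 < eps" and "eps \<le> d / 2"
    and "a - eps > 0" and "a + real k * d + eps < 1"
    and "y2 - y1 = int k"
    and "l1 < r1" and "l2 < r2"
    and "frac l1 = a + eps" and "frac l2 = a + real k * d + eps"
    and "frac r1 = a - eps" and "frac r2 = a + real k * d - eps"
    and "int k dvd \<lfloor>l2\<rfloor> - \<lfloor>l1\<rfloor>" and "int k dvd \<lfloor>r2\<rfloor> - \<lfloor>r1\<rfloor>"
  shows "\<exists>M::nat. \<forall>t\<in>{0..1::real}.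
    card {z :: int \<times> int. (real_of_int (fst z), real_of_int (snd z)) \<in>
      (\<lambda>x. t *\<^sub>R (-1, 0) + x) ` (convex hull {(l1, real_of_int y1), (r1, real_of_int y1),
                                             (l2, real_of_int y2), (r2, real_of_int y2)})}
    = M + pulse (arith_prog a k d) eps (frac t)"
proof -
  let ?count = "\<lambda>t. card {z :: int \<times> int. (real_of_int (fst z), real_of_int (snd z)) \<in>
      (\<lambda>x. t *\<^sub>R (-1, 0) + x) ` (convex hull {(l1, real_of_int y1), (r1, real_of_int y1),
                                             (l2, real_of_int y2), (r2, real_of_int y2)})}"
  let ?pulse = "\<lambda>t. pulse (arith_prog a k d) eps (frac t)"
  have k: "k > 0" and d: "2 * eps \<le> d" and d0: "0 \<le> d" using assms(1-3) by auto
  obtain c where row: "\<And>i t. i \<le> k \<Longrightarrow> 0 \<le> t \<Longrightarrow> t \<le> 1 \<Longrightarrow>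
      \<lfloor>edge_x r1 r2 k i - t\<rfloor> - \<lceil>edge_x l1 l2 k i - t\<rceil> + 1
      = c i - of_bool (\<bar>t - (a + real i * d)\<bar> < eps)"
    using trapezoid_row_counts[OF k assms(2) d0 assms(4,5,9-14)] by blast
  have count: "int (?count t) = ((\<Sum>i\<in>{0..k}. c i) - 1) + int (?pulse t)" if t: "t \<in> {0..1}" for t
  proof -
    have "int (?count t) = (\<Sum>i\<in>{0..k}. \<lfloor>edge_x r1 r2 k i - t\<rfloor> - \<lceil>edge_x l1 l2 k i - t\<rceil> + 1)"
      by (rule trapezoid_lattice_count) (use k assms(6-8) in auto)
    also have "\<dots> = (\<Sum>i\<in>{0..k}. c i - of_bool (\<bar>t - (a + real i * d)\<bar> < eps))"
      using row t by (intro sum.cong) auto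
    also have "\<dots> = ((\<Sum>i\<in>{0..k}. c i) - 1) + int (?pulse t)"
      using pulse_progression_frac[OF assms(2) d assms(4,5)] t by (simp add: sum_subtractf)
    finally show ?thesis .
  qed
  have "0 \<le> a" "a < 1"
    using progression_inside_unit_interval[OF d0 assms(4,5), of 0] assms(2) by simp_all
  then have "a \<in> {0..1}" "?pulse a = 0"
    using pulse_progression_start[OF assms(2)] by simp_all
  then have "\<exists>M::nat. \<forall>t\<in>{0..1}. ?count t = M + ?pulse t"
    by (intro nat_offset_exists[where c = "(\<Sum>i\<in>{0..k}. c i) - 1"] count)
  then show ?thesis by simp
qed

end
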